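(* Dynamic A* (with \texttt{reeval} either true or false) using a dyn-admissible dynamic heuristic returns optimal solutions: whenever it returns a path, that path is a solution of $\mathcal T$ of cost $h^*(s_I)$ (i.e., of minimal cost among all solutions).
   Context: A transition system is $\mathcal T=\langle S,L,c,T,s_I,S_G\rangle$ with finite states $S$, finite labels $L$, cost function $c:L\to\mathbb R_{\ge0}$, transitions $T\subseteq S\times L\times S$, initial state $s_I$, goal states $S_G\subseteq S$. Paths, costs, solutions (paths from $s_I$ to a goal state) are as usual; $h^*(s)$ is the minimal cost of a path from $s$ to a goal ($\infty$ if none). An information source $\sigma$ consists of a set $\mathcal I_\sigma$, $\iota_0^\sigma\in\mathcal I_\sigma$, $\mathrm{update}_\sigma:\mathcal I_\sigma\times T\to\mathcal I_\sigma$, $\mathrm{refine}_\sigma:\mathcal I_\sigma\times S\to\mathcal I_\sigma$. Reachable information: $\iota_n$ is reachable if obtained from $\iota_0^\sigma$ by a sequence of refine steps on states and update steps on transitions $e_1,\dots,e_n$, where each refined state and each origin of an updated transition is $s_I$ or the target of an earlier updated transition. A dynamic heuristic over $\sigma$ is $h:S\times\mathcal I_\sigma\to\mathbb R_{\ge0}\cup\{\infty\}$; it is dyn-admissible if $h(s,\iota)\le h^*(s)$ for all $s$ and all reachable $\iota$. Parent source $\sigma_p$: $\mathcal I_{\sigma_p}$ = partial functions $S\rightharpoonup\mathbb R_{\ge0}\times(T\cup\{\bot\})$; $\iota_0=\{s_I\mapsto\langle0,\bot\rangle\}$; refine is the identity; $\mathrm{update}(\iota,\langle s,\ell,s'\rangle)$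 with $\iota(s)=\langle g,\cdot\rangle$ changes only $s'$, setting it to $\langle g+c(\ell),\langle s,\ell,s'\rangle\rangle$ if $\iota(s')$ is undefined or has $g$-component $\ge g+c(\ell)$, otherwise unchanged. Dynamic A* takes $\mathcal T$, sources $\sigma_p,\sigma_h$, a dynamic heuristic $h$ over $\sigma_h$ and a Boolean flag \texttt{reeval}. Notation: at any moment $g(s)$ is the $g$-component of the current $\mathcal I(\sigma_p)(s)$ and $h(s)$ denotes $h(s,\mathcal I(\sigma_h))$ for the current $\mathcal I(\sigma_h)$. Open is a priority queue of entries $\langle s,g,h\rangle$ (duplicates allowed), popped by minimal stored value $g+h$ (ties arbitrary). Algorithm: 1. $\mathcal I(\sigma):=\iota_0^\sigma$ for both sources; $S_{\mathrm{known}}:=\{s_I\}$; Closed $:=\emptyset$; Open empty. If $h(s_I)<\infty$ insert $\langle s_I,g(s_I),h(s_I)\rangle$. 2. While Open is nonempty: pop an entry $\langle s,\hat g,\hat h\rangle$ of minimal $\hat g+\hat h$. If $s\in$ Closed, continue with the next iteration. Otherwise set $\mathcal I(\sigma):=\mathrm{refine}_\sigma(\mathcal I(\sigma),s)$ for both sources. If \texttt{reeval} is true and $\hat h<h(s)$: if $h(s)<\infty$ insert $\langle s,g(s),h(s)\rangle$; continue with the next iteration (this is a re-evaluation). Otherwise add $s$ to Closed ($s$ is expanded). If $s\in S_G$, return the path obtained by following the parent pointers of $\mathcal I(\sigma_p)$ from $s$ back to $s_I$. Otherwise, for each $t=\langle s,\ell,s'\rangle\in T$ in some order: let $old:=g(s')$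 if $s'\in S_{\mathrm{known}}$ and undefined otherwise; set $\mathcal I(\sigma):=\mathrm{update}_\sigma(\mathcal I(\sigma),t)$ for both sources; add $s'$ to $S_{\mathrm{known}}$; if $h(s')=\infty$ skip $s'$; else if $old$ is undefined insert $\langle s',g(s'),h(s')\rangle$; else if $old>g(s')$, remove $s'$ from Closed if it is there (reopening) and insert $\langle s',g(s'),h(s')\rangle$. 3. Return "unsolvable". *)

theory Defs
  imports Complex_Main "HOL-Library.Multiset" "HOL-Library.Extended_Nonnegative_Real"
begin

text \<open>States and labels are finite types (S = UNIV, L = UNIV).\<close>

record ('s, 'l) tsys =
  ts_T  :: "('s \<times> 'l \<times> 's) set"
  ts_c  :: "'l \<Rightarrow> real"
  ts_sI :: 's
  ts_SG :: "'s set"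

fun path_from :: "('s, 'l) tsys \<Rightarrow> 's \<Rightarrow> ('s \<times> 'l \<times> 's) list \<Rightarrow> 's \<Rightarrow> bool" where
  "path_from TS s [] t = (s = t)"
| "path_from TS s ((a, l, b) # es) t = (a = s \<and> (a, l, b) \<in> ts_T TS \<and> path_from TS b es t)"

definition path_cost :: "('s, 'l) tsys \<Rightarrow> ('s \<times> 'l \<times> 's) list \<Rightarrow> real" where
  "path_cost TS es = sum_list (map (\<lambda>(a, l, b). ts_c TS l) es)"

definition is_solution :: "('s, 'l) tsys \<Rightarrow> ('s \<times> 'l \<times> 's) list \<Rightarrow> bool" where
  "is_solution TS es = (\<exists>t \<in> ts_SG TS. path_from TS (ts_sI TS) es t)"

text \<open>h*(s): infimum (= minimum) of the costs of paths from s to a goal; \<infinity> if none.\<close>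
definition hstar :: "('s, 'l) tsys \<Rightarrow> 's \<Rightarrow> ennreal" where
  "hstar TS s = Inf {ennreal (path_cost TS es) | es t. t \<in> ts_SG TS \<and> path_from TS s es t}"

record ('i, 's, 'l) isrc =
  i_0   :: 'i
  i_upd :: "'i \<Rightarrow> ('s \<times> 'l \<times> 's) \<Rightarrow> 'i"
  i_ref :: "'i \<Rightarrow> 's \<Rightarrow> 'i"

inductive reach_info :: "('s, 'l) tsys \<Rightarrow> ('i, 's, 'l) isrc \<Rightarrow> 'i \<Rightarrow> 's set \<Rightarrow> bool"
  for TS \<sigma> where
  ri_init: "reach_info TS \<sigma> (i_0 \<sigma>) {ts_sI TS}"
| ri_ref: "reach_info TS \<sigma> \<iota> K \<Longrightarrow> s \<in> K \<Longrightarrow> reach_info TS \<sigma> (i_ref \<sigma> \<iota> s) K"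
| ri_upd: "reach_info TS \<sigma> \<iota> K \<Longrightarrow> (s, l, s') \<in> ts_T TS \<Longrightarrow> s \<in> K \<Longrightarrow>
           reach_info TS \<sigma> (i_upd \<sigma> \<iota> (s, l, s')) (insert s' K)"

definition reachable_info :: "('s, 'l) tsys \<Rightarrow> ('i, 's, 'l) isrc \<Rightarrow> 'i \<Rightarrow> bool" where
  "reachable_info TS \<sigma> \<iota> = (\<exists>K. reach_info TS \<sigma> \<iota> K)"

definition dyn_admissible :: "('s, 'l) tsys \<Rightarrow> ('i, 's, 'l) isrc \<Rightarrow> ('s \<Rightarrow> 'i \<Rightarrow> ennreal) \<Rightarrow> bool" where
  "dyn_admissible TS \<sigma> h = (\<forall>s \<iota>. reachable_info TS \<sigma> \<iota> \<longrightarrow> h s \<iota> \<le> hstar TS s)"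

type_synonym ('s, 'l) pinfo = "'s \<Rightarrow> (real \<times> ('s \<times> 'l \<times> 's) option) option"

text \<open>None in the second component represents \<bottom>.  The parent source's refine is the identity.
  Update from an undefined origin (never happens in the algorithm) leaves the information unchanged.\<close>
fun upd_p :: "('s, 'l) tsys \<Rightarrow> ('s, 'l) pinfo \<Rightarrow> ('s \<times> 'l \<times> 's) \<Rightarrow> ('s, 'l) pinfo" where
  "upd_p TS \<iota> (s, l, s') =
     (case \<iota> s of
        None \<Rightarrow> \<iota>
      | Some (g, _) \<Rightarrow>
          (case \<iota> s' of
             None \<Rightarrow> \<iota>(s' \<mapsto> (g + ts_c TS l, Some (s, l, s')))
           | Some (g', _) \<Rightarrow>
               (if g' \<ge> g + ts_c TS l then \<iota>(s' \<mapsto> (g + ts_c TS l, Some (s, l, s'))) else \<iota>)))"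

definition gval :: "('s, 'l) pinfo \<Rightarrow> 's \<Rightarrow> real" where
  "gval \<iota> s = fst (the (\<iota> s))"

text \<open>Following parent pointers from s back to s_I yields the path es (from s_I to s).\<close>
inductive follow :: "('s, 'l) pinfo \<Rightarrow> 's \<Rightarrow> 's \<Rightarrow> ('s \<times> 'l \<times> 's) list \<Rightarrow> bool"
  for \<iota> sI where
  fo_base: "follow \<iota> sI sI []"
| fo_step: "s \<noteq> sI \<Longrightarrow> \<iota> s = Some (g, Some (a, l, s)) \<Longrightarrow> follow \<iota> sI a es \<Longrightarrow>
            follow \<iota> sI s (es @ [(a, l, s)])"

record ('i, 's, 'l) conf =
  c_Ip     :: "('s, 'l) pinfo"
  c_Ih     :: 'i
  c_known  :: "'s set"
  c_closed :: "'s set"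
  c_open   :: "('s \<times> real \<times> ennreal) multiset"

datatype ('i, 's, 'l) res = Run "('i, 's, 'l) conf" | Ret "('s \<times> 'l \<times> 's) list" | Unsolvable

definition okey :: "'s \<times> real \<times> ennreal \<Rightarrow> ennreal" where
  "okey e = ennreal (fst (snd e)) + snd (snd e)"

definition init_conf :: "('s, 'l) tsys \<Rightarrow> ('i, 's, 'l) isrc \<Rightarrow> ('s \<Rightarrow> 'i \<Rightarrow> ennreal) \<Rightarrow> ('i, 's, 'l) conf" where
  "init_conf TS \<sigma> h =
     \<lparr> c_Ip = [ts_sI TS \<mapsto> (0, None)], c_Ih = i_0 \<sigma>, c_known = {ts_sI TS}, c_closed = {},
       c_open = (if h (ts_sI TS) (i_0 \<sigma>) < \<infinity> then {# (ts_sI TS, 0, h (ts_sI TS) (i_0 \<sigma>)) #} else {#}) \<rparr>"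

fun process_trans :: "('s, 'l) tsys \<Rightarrow> ('i, 's, 'l) isrc \<Rightarrow> ('s \<Rightarrow> 'i \<Rightarrow> ennreal) \<Rightarrow>
    ('i, 's, 'l) conf \<Rightarrow> ('s \<times> 'l \<times> 's) \<Rightarrow> ('i, 's, 'l) conf" where
  "process_trans TS \<sigma> h cf (s, l, s') =
     (let old = (if s' \<in> c_known cf then Some (gval (c_Ip cf) s') else None);
          Ip' = upd_p TS (c_Ip cf) (s, l, s');
          Ih' = i_upd \<sigma> (c_Ih cf) (s, l, s');
          cf1 = cf\<lparr> c_Ip := Ip', c_Ih := Ih', c_known := insert s' (c_known cf) \<rparr>;
          hv = h s' Ih'
      in if hv = \<infinity> then cf1
         else (case old of
                 None \<Rightarrow> cf1\<lparr> c_open := add_mset (s', gval Ip' s', hv) (c_open cf) \<rparr>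
               | Some og \<Rightarrow>
                   (if og > gval Ip' s'
                    then cf1\<lparr> c_closed := c_closed cf - {s'},
                              c_open := add_mset (s', gval Ip' s', hv) (c_open cf) \<rparr>
                    else cf1)))"

text \<open>One iteration of the main loop (nondeterministic: ties in Open and the order of
  the outgoing transitions are arbitrary).\<close>
inductive da_step :: "('s, 'l) tsys \<Rightarrow> ('i, 's, 'l) isrc \<Rightarrow> ('s \<Rightarrow> 'i \<Rightarrow> ennreal) \<Rightarrow> bool \<Rightarrow>
    ('i, 's, 'l) conf \<Rightarrow> ('i, 's, 'l) res \<Rightarrow> bool"
  for TS \<sigma> h reeval where
  ds_empty: "c_open cf = {#} \<Longrightarrow> da_step TS \<sigma> h reeval cf Unsolvable"
| ds_closed: "e \<in># c_open cf \<Longrightarrow> (\<forall>e' \<in># c_open cf. okey e \<le> okey e') \<Longrightarrow> fst e \<in> c_closed cf \<Longrightarrow>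
     da_step TS \<sigma> h reeval cf (Run (cf\<lparr> c_open := c_open cf - {#e#} \<rparr>))"
| ds_reeval: "(s, gh, hh) \<in># c_open cf \<Longrightarrow> (\<forall>e' \<in># c_open cf. okey (s, gh, hh) \<le> okey e') \<Longrightarrow>
     s \<notin> c_closed cf \<Longrightarrow> Ih' = i_ref \<sigma> (c_Ih cf) s \<Longrightarrow> reeval \<Longrightarrow> hh < h s Ih' \<Longrightarrow>
     da_step TS \<sigma> h reeval cf
       (Run (cf\<lparr> c_Ih := Ih',
                 c_open := (if h s Ih' < \<infinity>
                            then add_mset (s, gval (c_Ip cf) s, h s Ih') (c_open cf - {#(s, gh, hh)#})
                            else c_open cf - {#(s, gh, hh)#}) \<rparr>))"
| ds_goal: "(s, gh, hh) \<in># c_open cf \<Longrightarrow> (\<forall>e' \<in># c_open cf. okey (s, gh, hh) \<le> okey e') \<Longrightarrow>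
     s \<notin> c_closed cf \<Longrightarrow> Ih' = i_ref \<sigma> (c_Ih cf) s \<Longrightarrow> \<not> (reeval \<and> hh < h s Ih') \<Longrightarrow>
     s \<in> ts_SG TS \<Longrightarrow> follow (c_Ip cf) (ts_sI TS) s es \<Longrightarrow>
     da_step TS \<sigma> h reeval cf (Ret es)"
| ds_expand: "(s, gh, hh) \<in># c_open cf \<Longrightarrow> (\<forall>e' \<in># c_open cf. okey (s, gh, hh) \<le> okey e') \<Longrightarrow>
     s \<notin> c_closed cf \<Longrightarrow> Ih' = i_ref \<sigma> (c_Ih cf) s \<Longrightarrow> \<not> (reeval \<and> hh < h s Ih') \<Longrightarrow>
     s \<notin> ts_SG TS \<Longrightarrow> distinct ts \<Longrightarrow> set ts = {t \<in> ts_T TS. fst t = s} \<Longrightarrow>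
     da_step TS \<sigma> h reeval cf
       (Run (fold (\<lambda>t c. process_trans TS \<sigma> h c t) ts
               (cf\<lparr> c_Ih := Ih', c_closed := insert s (c_closed cf),
                    c_open := c_open cf - {#(s, gh, hh)#} \<rparr>)))"

fun res_step :: "('s, 'l) tsys \<Rightarrow> ('i, 's, 'l) isrc \<Rightarrow> ('s \<Rightarrow> 'i \<Rightarrow> ennreal) \<Rightarrow> bool \<Rightarrow>
    ('i, 's, 'l) res \<Rightarrow> ('i, 's, 'l) res \<Rightarrow> bool" where
  "res_step TS \<sigma> h reeval (Run cf) r = da_step TS \<sigma> h reeval cf r"
| "res_step TS \<sigma> h reeval _ r = False"

definition dastar_returns :: "('s, 'l) tsys \<Rightarrow> ('i, 's, 'l) isrc \<Rightarrow> ('s \<Rightarrow> 'i \<Rightarrow> ennreal) \<Rightarrow> bool \<Rightarrow>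
    ('s \<times> 'l \<times> 's) list \<Rightarrow> bool" where
  "dastar_returns TS \<sigma> h reeval es =
     (res_step TS \<sigma> h reeval)\<^sup>*\<^sup>* (Run (init_conf TS \<sigma> h)) (Ret es)"

end

theory Submission
  imports Defs
begin

text \<open>Dynamic A* maintains the classical A* invariant. All information the algorithm ever holds
  is reachable, so by dyn-admissibility every heuristic value stored in Open is at most h*.
  Parent pointers always describe a path from the initial state of cost at most the current
  g-value. Every known state that is not closed and can reach a goal has an Open entry with its
  current g-value, and the transitions out of closed states are relaxed. Hence, on any solution,
  the first state that is not closed has an Open entry whose key is at most the cost of that
  solution; a goal popped with minimal key therefore comes with a path of optimal cost.
  Re-evaluation only replaces an entry by one with the current g-value, and reopening pushes a
  state whose g-value has dropped, so neither breaks the invariant.\<close>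

section \<open>Paths and optimal cost\<close>

lemma path_from_append:
  "path_from TS u (es @ fs) w \<longleftrightarrow> (\<exists>v. path_from TS u es v \<and> path_from TS v fs w)"
  by (induction es arbitrary: u) auto

lemma path_cost_Nil [simp]: "path_cost TS [] = 0"
  by (simp add: path_cost_def)

lemma path_cost_Cons [simp]: "path_cost TS ((a, l, b) # es) = ts_c TS l + path_cost TS es"
  by (simp add: path_cost_def)

lemma path_cost_append [simp]: "path_cost TS (es @ fs) = path_cost TS es + path_cost TS fs"
  by (simp add: path_cost_def)

lemma path_cost_nonneg: "\<forall>l. 0 \<le> ts_c TS l \<Longrightarrow> 0 \<le> path_cost TS es"
  unfolding path_cost_def by (induction es) auto

lemma hstar_le_path_cost:
  "path_from TS s es t \<Longrightarrow> t \<in> ts_SG TS \<Longrightarrow> hstar TS s \<le> ennreal (path_cost TS es)"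
  unfolding hstar_def by (rule Inf_lower) blast

lemma hstar_finite_if_path:
  "path_from TS s es t \<Longrightarrow> t \<in> ts_SG TS \<Longrightarrow> hstar TS s < \<infinity>"
  using hstar_le_path_cost by (metis ennreal_less_top infinity_ennreal_def order.strict_trans1)

lemma dyn_admissibleD:
  "dyn_admissible TS \<sigma> h \<Longrightarrow> reach_info TS \<sigma> \<iota> K \<Longrightarrow> h s \<iota> \<le> hstar TS s"
  unfolding dyn_admissible_def reachable_info_def by blast

section \<open>The parent source\<close>

lemma upd_p_other: "x \<noteq> b \<Longrightarrow> upd_p TS Ip (a, l, b) x = Ip x"
  by (auto split: option.splits)

lemma upd_p_cases [consumes 1, case_names unchanged relaxed]:
  assumes "a \<in> dom Ip"
  obtains (unchanged) "b \<in> dom Ip" "upd_p TS Ip (a, l, b) = Ip" "gval Ip b < gval Ip a + ts_c TS l"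
    | (relaxed) "upd_p TS Ip (a, l, b) = Ip(b \<mapsto> (gval Ip a + ts_c TS l, Some (a, l, b)))"
        "b \<in> dom Ip \<Longrightarrow> gval Ip a + ts_c TS l \<le> gval Ip b"
proof -
  obtain ga pa where "Ip a = Some (ga, pa)" using assms by auto
  show thesis
  proof (cases "Ip b")
    case None
    then show thesis using relaxed \<open>Ip a = _\<close> by (simp add: gval_def domIff)
  next
    case (Some v)
    obtain gb pb where b: "Ip b = Some (gb, pb)" using Some by (cases v) auto
    show thesis
    proof (cases "ga + ts_c TS l \<le> gb")
      case True
      then show thesis using relaxed \<open>Ip a = _\<close> b by (simp add: gval_def)
    next
      case False
      then show thesis using unchanged \<open>Ip a = _\<close> b by (simp add: domI gval_def)
    qed
  qed
qed

declare upd_p.simps [simp del]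

lemma dom_upd_p: "a \<in> dom Ip \<Longrightarrow> dom (upd_p TS Ip (a, l, b)) = insert b (dom Ip)"
  by (cases rule: upd_p_cases[where TS = TS and l = l and b = b]) auto

lemma gval_upd_p_other: "x \<noteq> b \<Longrightarrow> gval (upd_p TS Ip (a, l, b)) x = gval Ip x"
  by (simp add: gval_def upd_p_other)

lemma gval_upd_p_le: "a \<in> dom Ip \<Longrightarrow> x \<in> dom Ip \<Longrightarrow> gval (upd_p TS Ip (a, l, b)) x \<le> gval Ip x"
  by (cases rule: upd_p_cases[where TS = TS and l = l and b = b]) (auto simp: gval_def domIff)

lemma gval_upd_p_relax:
  "a \<in> dom Ip \<Longrightarrow> gval (upd_p TS Ip (a, l, b)) b \<le> gval Ip a + ts_c TS l"
  by (cases rule: upd_p_cases[where TS = TS and l = l and b = b]) (auto simp: gval_def domIff)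

definition parent_wf :: "('s, 'l) tsys \<Rightarrow> ('s, 'l) pinfo \<Rightarrow> 's set \<Rightarrow> bool" where
  "parent_wf TS Ip K \<longleftrightarrow> dom Ip = K \<and> ts_sI TS \<in> K \<and> gval Ip (ts_sI TS) = 0 \<and>
     (\<forall>x \<in> K. 0 \<le> gval Ip x) \<and>
     (\<forall>x g a l y. Ip x = Some (g, Some (a, l, y)) \<longrightarrow>
        y = x \<and> (a, l, x) \<in> ts_T TS \<and> a \<in> K \<and> gval Ip a + ts_c TS l \<le> g)"

lemma parent_wf_upd_p:
  assumes cost: "\<forall>l. 0 \<le> ts_c TS l" and wf: "parent_wf TS Ip K"
    and t: "(a, l, b) \<in> ts_T TS" and a: "a \<in> K"
  shows "parent_wf TS (upd_p TS Ip (a, l, b)) (insert b K)"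
proof -
  have dom: "dom Ip = K" and a': "a \<in> dom Ip" using wf a by (auto simp: parent_wf_def)
  from a' show ?thesis
  proof (cases rule: upd_p_cases[where TS = TS and l = l and b = b])
    case unchanged
    then show ?thesis using wf dom by (simp add: insert_absorb)
  next
    case relaxed
    let ?Ip' = "upd_p TS Ip (a, l, b)"
    have le: "gval ?Ip' x \<le> gval Ip x" if "x \<in> K" for x
      using gval_upd_p_le[OF a'] that dom by blast
    have gb: "gval ?Ip' b = gval Ip a + ts_c TS l"
      using relaxed(1) by (simp add: gval_def)
    have g_other: "gval ?Ip' x = gval Ip x" if "x \<noteq> b" for x
      using that by (rule gval_upd_p_other)
    have ga: "0 \<le> gval Ip a" using wf a by (simp add: parent_wf_def)
    have "gval ?Ip' (ts_sI TS) = 0"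
    proof (cases "ts_sI TS = b")
      case True
      then have "gval ?Ip' b \<le> 0" using le[of b] wf by (simp add: parent_wf_def)
      then show ?thesis using gb ga cost[rule_format, of l] by (simp add: True)
    qed (use wf g_other in \<open>simp add: parent_wf_def\<close>)
    moreover have "0 \<le> gval ?Ip' x" if "x \<in> insert b K" for x
      using that wf g_other gb ga cost by (cases "x = b") (auto simp: parent_wf_def)
    moreover have "y = x \<and> (a', l', x) \<in> ts_T TS \<and> a' \<in> insert b K \<and> gval ?Ip' a' + ts_c TS l' \<le> g"
      if "?Ip' x = Some (g, Some (a', l', y))" for x g a' l' y
    proof (cases "x = b")
      case True
      then show ?thesis using that relaxed(1) t a le[of a] by (auto simp: gval_def)
    next
      case False
      then have "Ip x = Some (g, Some (a', l', y))" using that upd_p_other by metis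
      then show ?thesis using wf le[of a'] by (fastforce simp: parent_wf_def)
    qed
    ultimately show ?thesis
      using wf a' dom_upd_p[OF a'] by (simp add: parent_wf_def)
  qed
qed

lemma follow_parent_path:
  assumes wf: "parent_wf TS Ip K"
  shows "follow Ip (ts_sI TS) s es \<Longrightarrow> path_from TS (ts_sI TS) es s \<and> path_cost TS es \<le> gval Ip s"
proof (induction rule: follow.induct)
  case fo_base
  then show ?case using wf by (simp add: parent_wf_def)
next
  case (fo_step s g a l es)
  then have "(a, l, s) \<in> ts_T TS" and "gval Ip a + ts_c TS l \<le> g" and "gval Ip s = g"
    using wf by (auto simp: parent_wf_def gval_def)
  then show ?case using fo_step.IH by (auto simp: path_from_append)
qed

section \<open>The invariant of Dynamic A*\<close>

text \<open>Open entries may be stale: their g-component only bounds the current g-value from above.\<close>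

definition open_sound :: "('s, 'l) tsys \<Rightarrow> ('s, 'l) pinfo \<Rightarrow> 's set \<Rightarrow> ('s \<times> real \<times> ennreal) multiset \<Rightarrow> bool" where
  "open_sound TS Ip K Op \<longleftrightarrow> (\<forall>(x, g, hv) \<in># Op. x \<in> K \<and> gval Ip x \<le> g \<and> hv \<le> hstar TS x)"

text \<open>A state whose heuristic value is \<infinity> is never pushed, not even when its g-value drops
  while it is closed; hence the following two conditions only concern states that can reach a goal.\<close>

definition open_complete :: "('s, 'l) tsys \<Rightarrow> ('s, 'l) pinfo \<Rightarrow> 's set \<Rightarrow> 's set \<Rightarrow> ('s \<times> real \<times> ennreal) multiset \<Rightarrow> bool" where
  "open_complete TS Ip K C Op \<longleftrightarrow> (\<forall>x \<in> K - C. hstar TS x < \<infinity> \<longrightarrow> (\<exists>hv. (x, gval Ip x, hv) \<in># Op))"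

definition closed_relaxed :: "('s, 'l) tsys \<Rightarrow> ('s, 'l) pinfo \<Rightarrow> 's set \<Rightarrow> ('s \<times> 'l \<times> 's) set \<Rightarrow> bool" where
  "closed_relaxed TS Ip C A \<longleftrightarrow> (\<forall>x \<in> C. hstar TS x < \<infinity> \<longrightarrow>
     (\<forall>l y. (x, l, y) \<in> ts_T TS \<inter> A \<longrightarrow> y \<in> dom Ip \<and> gval Ip y \<le> gval Ip x + ts_c TS l))"

text \<open>The set A contains the transitions out of closed states that are known to be relaxed;
  while a state is being expanded, its unprocessed transitions are missing from A.\<close>

definition astar_inv :: "('s, 'l) tsys \<Rightarrow> ('i, 's, 'l) isrc \<Rightarrow> ('s \<times> 'l \<times> 's) set \<Rightarrow> ('i, 's, 'l) conf \<Rightarrow> bool" where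
  "astar_inv TS \<sigma> A cf \<longleftrightarrow>
     reach_info TS \<sigma> (c_Ih cf) (c_known cf) \<and> parent_wf TS (c_Ip cf) (c_known cf) \<and>
     open_sound TS (c_Ip cf) (c_known cf) (c_open cf) \<and>
     open_complete TS (c_Ip cf) (c_known cf) (c_closed cf) (c_open cf) \<and>
     closed_relaxed TS (c_Ip cf) (c_closed cf) A \<and>
     c_closed cf \<subseteq> c_known cf \<and> c_closed cf \<inter> ts_SG TS = {}"

lemma astar_inv_mono:
  assumes "astar_inv TS \<sigma> A cf" and "ts_T TS \<inter> B \<subseteq> A"
  shows "astar_inv TS \<sigma> B cf"
proof -
  have "closed_relaxed TS (c_Ip cf) (c_closed cf) B"
    using assms unfolding astar_inv_def closed_relaxed_def by blast
  then show ?thesis using assms(1) by (simp add: astar_inv_def)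
qed

section \<open>Optimality of a returned path\<close>

lemma open_state_on_path:
  assumes cost: "\<forall>l. 0 \<le> ts_c TS l" and wf: "parent_wf TS Ip K"
    and relaxed: "closed_relaxed TS Ip C UNIV" and no_goal: "C \<inter> ts_SG TS = {}"
    and path: "path_from TS u es t" and t: "t \<in> ts_SG TS" and u: "u \<in> K"
  shows "\<exists>v \<in> K - C. ennreal (gval Ip v) + hstar TS v \<le> ennreal (gval Ip u + path_cost TS es)"
proof -
  have dom: "dom Ip = K" and g_nonneg: "\<And>x. x \<in> K \<Longrightarrow> 0 \<le> gval Ip x"
    using wf by (auto simp: parent_wf_def)
  have open_here: "\<exists>v \<in> K - C. ennreal (gval Ip v) + hstar TS v \<le> ennreal (gval Ip u + path_cost TS es)"
    if "path_from TS u es t" "u \<in> K" "u \<notin> C" for u es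
  proof
    show "u \<in> K - C" using that by blast
    have "ennreal (gval Ip u) + hstar TS u \<le> ennreal (gval Ip u) + ennreal (path_cost TS es)"
      using hstar_le_path_cost[OF that(1) t] by (rule add_left_mono)
    also have "\<dots> = ennreal (gval Ip u + path_cost TS es)"
      using g_nonneg[OF that(2)] path_cost_nonneg[OF cost] by (simp add: ennreal_plus)
    finally show "ennreal (gval Ip u) + hstar TS u \<le> ennreal (gval Ip u + path_cost TS es)" .
  qed
  show ?thesis using path u
  proof (induction es arbitrary: u)
    case Nil
    then have "u \<notin> C" using no_goal t by auto
    then show ?case using open_here[of u "[]"] Nil by simp
  next
    case (Cons e es)
    show ?case
    proof (cases "u \<in> C")
      case False
      then show ?thesis using open_here Cons.prems by blast
    next
      case True
      obtain l b where e: "e = (u, l, b)" and ub: "(u, l, b) \<in> ts_T TS" and path_b: "path_from TS b es t"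
        using Cons.prems(1) by (cases e) auto
      have "hstar TS u < \<infinity>" using hstar_finite_if_path[OF Cons.prems(1) t] .
      then have b: "b \<in> K" and gb: "gval Ip b \<le> gval Ip u + ts_c TS l"
        using relaxed True ub dom by (auto simp: closed_relaxed_def)
      obtain v where v: "v \<in> K - C"
        and bound: "ennreal (gval Ip v) + hstar TS v \<le> ennreal (gval Ip b + path_cost TS es)"
        using Cons.IH[OF path_b b] by blast
      have "ennreal (gval Ip b + path_cost TS es) \<le> ennreal (gval Ip u + path_cost TS (e # es))"
        using gb e by (intro ennreal_leI) simp
      with v bound show ?thesis by (blast intro: order.trans)
    qed
  qed
qed

lemma open_entry_below_solution:
  assumes cost: "\<forall>l. 0 \<le> ts_c TS l" and inv: "astar_inv TS \<sigma> UNIV cf"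
    and path: "path_from TS (ts_sI TS) es t" and t: "t \<in> ts_SG TS"
  shows "\<exists>e \<in># c_open cf. okey e \<le> ennreal (path_cost TS es)"
proof -
  let ?Ip = "c_Ip cf" and ?K = "c_known cf" and ?C = "c_closed cf"
  have wf: "parent_wf TS ?Ip ?K" and relaxed: "closed_relaxed TS ?Ip ?C UNIV"
    and no_goal: "?C \<inter> ts_SG TS = {}"
    and sound: "open_sound TS ?Ip ?K (c_open cf)" and complete: "open_complete TS ?Ip ?K ?C (c_open cf)"
    using inv by (auto simp: astar_inv_def)
  have sI: "ts_sI TS \<in> ?K" "gval ?Ip (ts_sI TS) = 0" using wf by (auto simp: parent_wf_def)
  obtain v where v: "v \<in> ?K - ?C"
    and bound: "ennreal (gval ?Ip v) + hstar TS v \<le> ennreal (path_cost TS es)"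
    using open_state_on_path[OF cost wf relaxed no_goal path t sI(1)] sI(2) by auto
  have "hstar TS v \<le> ennreal (path_cost TS es)"
    using bound by (rule order.trans[rotated]) simp
  then have "hstar TS v < \<infinity>"
    by (metis ennreal_less_top infinity_ennreal_def order.strict_trans1)
  then obtain hv where entry: "(v, gval ?Ip v, hv) \<in># c_open cf"
    using complete v by (auto simp: open_complete_def)
  have "okey (v, gval ?Ip v, hv) = ennreal (gval ?Ip v) + hv" by (simp add: okey_def)
  also have "\<dots> \<le> ennreal (gval ?Ip v) + hstar TS v"
    using sound entry by (intro add_left_mono) (auto simp: open_sound_def)
  finally show ?thesis using entry bound by (blast intro: order.trans)
qed

lemma returned_path_optimal:
  assumes cost: "\<forall>l. 0 \<le> ts_c TS l" and inv: "astar_inv TS \<sigma> UNIV cf"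
    and entry: "(s, gh, hh) \<in># c_open cf" and min: "\<forall>e \<in># c_open cf. okey (s, gh, hh) \<le> okey e"
    and goal: "s \<in> ts_SG TS" and follow: "follow (c_Ip cf) (ts_sI TS) s es"
  shows "is_solution TS es \<and> ennreal (path_cost TS es) = hstar TS (ts_sI TS)"
proof -
  have wf: "parent_wf TS (c_Ip cf) (c_known cf)"
    and sound: "open_sound TS (c_Ip cf) (c_known cf) (c_open cf)"
    using inv by (auto simp: astar_inv_def)
  have path: "path_from TS (ts_sI TS) es s" and "path_cost TS es \<le> gval (c_Ip cf) s"
    using follow_parent_path[OF wf follow] by auto
  moreover have "gval (c_Ip cf) s \<le> gh" using sound entry by (auto simp: open_sound_def)
  ultimately have "ennreal (path_cost TS es) \<le> ennreal gh" by (intro ennreal_leI) simp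
  also have "\<dots> \<le> okey (s, gh, hh)" by (simp add: okey_def)
  finally have below_key: "ennreal (path_cost TS es) \<le> okey (s, gh, hh)" .
  have "ennreal (path_cost TS es) \<le> ennreal (path_cost TS P)"
    if solution: "path_from TS (ts_sI TS) P t" "t \<in> ts_SG TS" for P t
  proof -
    obtain e where "e \<in># c_open cf" "okey e \<le> ennreal (path_cost TS P)"
      using open_entry_below_solution[OF cost inv solution] by blast
    then show ?thesis using min below_key by (blast intro: order.trans)
  qed
  then have "ennreal (path_cost TS es) \<le> hstar TS (ts_sI TS)"
    unfolding hstar_def by (blast intro: Inf_greatest)
  moreover have "hstar TS (ts_sI TS) \<le> ennreal (path_cost TS es)"
    using hstar_le_path_cost[OF path goal] .
  ultimately show ?thesis using path goal by (auto simp: is_solution_def)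
qed

section \<open>Preservation of the invariant\<close>

lemma astar_inv_init:
  assumes adm: "dyn_admissible TS \<sigma> h"
  shows "astar_inv TS \<sigma> A (init_conf TS \<sigma> h)"
proof -
  have "h (ts_sI TS) (i_0 \<sigma>) \<le> hstar TS (ts_sI TS)"
    using dyn_admissibleD[OF adm ri_init] .
  then show ?thesis
    by (auto simp: astar_inv_def init_conf_def parent_wf_def gval_def open_sound_def
        open_complete_def closed_relaxed_def ri_init dest: order.strict_trans1)
qed

lemma open_complete_remove:
  assumes complete: "open_complete TS Ip K C Op" and "fst e \<in> C'" and "C \<subseteq> C'"
  shows "open_complete TS Ip K C' (Op - {#e#})"
  unfolding open_complete_def
proof (intro ballI impI)
  fix x assume x: "x \<in> K - C'" and "hstar TS x < \<infinity>"
  then obtain hv where "(x, gval Ip x, hv) \<in># Op"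
    using complete assms(3) by (auto simp: open_complete_def)
  moreover have "(x, gval Ip x, hv) \<noteq> e" using x assms(2) by auto
  ultimately have "(x, gval Ip x, hv) \<in># Op - {#e#}" by (simp add: in_diff_count)
  then show "\<exists>hv. (x, gval Ip x, hv) \<in># Op - {#e#}" ..
qed

lemma open_sound_remove: "open_sound TS Ip K Op \<Longrightarrow> open_sound TS Ip K (Op - M)"
  by (auto simp: open_sound_def dest: in_diffD)

lemma astar_inv_drop_closed:
  assumes inv: "astar_inv TS \<sigma> A cf" and closed: "fst e \<in> c_closed cf"
  shows "astar_inv TS \<sigma> A (cf\<lparr>c_open := c_open cf - {#e#}\<rparr>)"
  using inv open_complete_remove[OF _ closed order.refl] open_sound_remove
  by (auto simp: astar_inv_def)

lemma astar_inv_reeval: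
  assumes adm: "dyn_admissible TS \<sigma> h" and inv: "astar_inv TS \<sigma> A cf"
    and entry: "(s, gh, hh) \<in># c_open cf" and open_s: "s \<notin> c_closed cf"
    and Ih': "Ih' = i_ref \<sigma> (c_Ih cf) s"
  shows "astar_inv TS \<sigma> A (cf\<lparr>c_Ih := Ih',
           c_open := (if h s Ih' < \<infinity>
                      then add_mset (s, gval (c_Ip cf) s, h s Ih') (c_open cf - {#(s, gh, hh)#})
                      else c_open cf - {#(s, gh, hh)#})\<rparr>)"
proof -
  let ?Ip = "c_Ip cf" and ?K = "c_known cf" and ?C = "c_closed cf"
  let ?Op = "c_open cf - {#(s, gh, hh)#}"
  have sound: "open_sound TS ?Ip ?K (c_open cf)" and complete: "open_complete TS ?Ip ?K ?C (c_open cf)"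
    using inv by (auto simp: astar_inv_def)
  have s: "s \<in> ?K" using sound entry by (auto simp: open_sound_def)
  have reach: "reach_info TS \<sigma> Ih' ?K"
    unfolding Ih' by (rule ri_ref[OF _ s]) (use inv in \<open>simp add: astar_inv_def\<close>)
  have h_le: "h s Ih' \<le> hstar TS s" using dyn_admissibleD[OF adm reach] .
  have complete_s: "open_complete TS ?Ip ?K (insert s ?C) ?Op"
    by (rule open_complete_remove[OF complete]) auto
  have "open_complete TS ?Ip ?K ?C (if h s Ih' < \<infinity> then add_mset (s, gval ?Ip s, h s Ih') ?Op else ?Op)"
    using complete_s h_le by (auto simp: open_complete_def dest: order.strict_trans1)
  moreover have "open_sound TS ?Ip ?K (if h s Ih' < \<infinity> then add_mset (s, gval ?Ip s, h s Ih') ?Op else ?Op)"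
    using open_sound_remove[OF sound] s h_le by (simp add: open_sound_def)
  ultimately show ?thesis using inv reach by (simp add: astar_inv_def)
qed

lemma process_trans_cases [case_names keep push]:
  fixes TS :: "('s, 'l) tsys" and \<sigma> :: "('i, 's, 'l) isrc" and cf :: "('i, 's, 'l) conf"
    and a b :: 's and l :: 'l
  defines "Ip' \<equiv> upd_p TS (c_Ip cf) (a, l, b)" and "Ih' \<equiv> i_upd \<sigma> (c_Ih cf) (a, l, b)"
  assumes closed_known: "c_closed cf \<subseteq> c_known cf"
  obtains (keep)
      "process_trans TS \<sigma> h cf (a, l, b) = cf\<lparr>c_Ip := Ip', c_Ih := Ih', c_known := insert b (c_known cf)\<rparr>"
      "h b Ih' = \<infinity> \<or> b \<in> c_known cf \<and> gval (c_Ip cf) b \<le> gval Ip' b"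
    | (push)
      "process_trans TS \<sigma> h cf (a, l, b) = cf\<lparr>c_Ip := Ip', c_Ih := Ih', c_known := insert b (c_known cf),
         c_closed := c_closed cf - {b}, c_open := add_mset (b, gval Ip' b, h b Ih') (c_open cf)\<rparr>"
      "h b Ih' \<noteq> \<infinity>"
proof -
  consider "h b Ih' = \<infinity>" | "h b Ih' \<noteq> \<infinity>" "b \<notin> c_known cf"
    | "h b Ih' \<noteq> \<infinity>" "b \<in> c_known cf" "gval Ip' b < gval (c_Ip cf) b"
    | "h b Ih' \<noteq> \<infinity>" "b \<in> c_known cf" "gval (c_Ip cf) b \<le> gval Ip' b"
    by fastforce
  then show thesis
  proof cases
    case 1
    then show thesis using keep by (simp add: Ip'_def Ih'_def Let_def)
  next
    case 2
    then have "c_closed cf - {b} = c_closed cf" using closed_known by auto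
    then show thesis using push 2 by (simp add: Ip'_def Ih'_def Let_def)
  next
    case 3
    then show thesis using push by (simp add: Ip'_def Ih'_def Let_def)
  next
    case 4
    then show thesis using keep by (simp add: Ip'_def Ih'_def Let_def)
  qed
qed

lemma c_known_process_trans: "c_known (process_trans TS \<sigma> h cf (a, l, b)) = insert b (c_known cf)"
  by (simp add: Let_def split: option.splits)

declare process_trans.simps [simp del]

lemma open_sound_upd_p:
  assumes "open_sound TS Ip K Op" and "a \<in> dom Ip" and "K \<subseteq> dom Ip"
  shows "open_sound TS (upd_p TS Ip (a, l, b)) (insert b K) Op"
  unfolding open_sound_def
proof (intro ballI, clarify)
  fix x g hv assume "(x, g, hv) \<in># Op"
  then have "x \<in> K" "gval Ip x \<le> g" "hv \<le> hstar TS x" using assms(1) by (auto simp: open_sound_def)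
  moreover have "gval (upd_p TS Ip (a, l, b)) x \<le> gval Ip x"
    using gval_upd_p_le[OF assms(2)] \<open>x \<in> K\<close> assms(3) by blast
  ultimately show "x \<in> insert b K \<and> gval (upd_p TS Ip (a, l, b)) x \<le> g \<and> hv \<le> hstar TS x" by simp
qed

lemma closed_relaxed_upd_p:
  assumes relaxed: "closed_relaxed TS Ip C A" and a: "a \<in> dom Ip" and C': "C' \<subseteq> C"
    and unchanged: "\<forall>x \<in> C'. hstar TS x < \<infinity> \<longrightarrow> gval (upd_p TS Ip (a, l, b)) x = gval Ip x"
  shows "closed_relaxed TS (upd_p TS Ip (a, l, b)) C' (insert (a, l, b) A)"
  unfolding closed_relaxed_def
proof (intro ballI impI allI)
  let ?Ip' = "upd_p TS Ip (a, l, b)"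
  fix x l' y assume x: "x \<in> C'" and fin: "hstar TS x < \<infinity>"
    and xy: "(x, l', y) \<in> ts_T TS \<inter> insert (a, l, b) A"
  have gx: "gval ?Ip' x = gval Ip x" using unchanged x fin by simp
  show "y \<in> dom ?Ip' \<and> gval ?Ip' y \<le> gval ?Ip' x + ts_c TS l'"
  proof (cases "(x, l', y) = (a, l, b)")
    case True
    then show ?thesis using gval_upd_p_relax[OF a] dom_upd_p[OF a] gx by simp
  next
    case False
    then have "(x, l', y) \<in> ts_T TS \<inter> A" using xy by auto
    then have y: "y \<in> dom Ip" and "gval Ip y \<le> gval Ip x + ts_c TS l'"
      using relaxed x C' fin unfolding closed_relaxed_def by blast+
    moreover have "gval ?Ip' y \<le> gval Ip y" using gval_upd_p_le[OF a y] .
    ultimately show ?thesis using dom_upd_p[OF a] gx by simp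
  qed
qed

lemma astar_inv_process_trans:
  assumes cost: "\<forall>l. 0 \<le> ts_c TS l" and adm: "dyn_admissible TS \<sigma> h"
    and inv: "astar_inv TS \<sigma> A cf" and t: "(a, l, b) \<in> ts_T TS" and a: "a \<in> c_known cf"
  shows "astar_inv TS \<sigma> (insert (a, l, b) A) (process_trans TS \<sigma> h cf (a, l, b))"
proof -
  let ?Ip = "c_Ip cf" and ?K = "c_known cf" and ?C = "c_closed cf" and ?Op = "c_open cf"
  let ?Ip' = "upd_p TS ?Ip (a, l, b)" and ?Ih' = "i_upd \<sigma> (c_Ih cf) (a, l, b)"
  have wf: "parent_wf TS ?Ip ?K" and sound: "open_sound TS ?Ip ?K ?Op"
    and complete: "open_complete TS ?Ip ?K ?C ?Op" and relaxed: "closed_relaxed TS ?Ip ?C A"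
    and closed_known: "?C \<subseteq> ?K" and no_goal: "?C \<inter> ts_SG TS = {}"
    using inv by (auto simp: astar_inv_def)
  have dom: "dom ?Ip = ?K" using wf by (simp add: parent_wf_def)
  have a': "a \<in> dom ?Ip" using a dom by simp
  have reach': "reach_info TS \<sigma> ?Ih' (insert b ?K)"
    by (rule ri_upd[OF _ t a]) (use inv in \<open>simp add: astar_inv_def\<close>)
  have h_le: "h b ?Ih' \<le> hstar TS b" using dyn_admissibleD[OF adm reach'] .
  have wf': "parent_wf TS ?Ip' (insert b ?K)" using parent_wf_upd_p[OF cost wf t a] .
  have sound': "open_sound TS ?Ip' (insert b ?K) ?Op"
    using open_sound_upd_p[OF sound a'] dom by simp
  have g_other: "gval ?Ip' x = gval ?Ip x" if "x \<noteq> b" for x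
    using that by (rule gval_upd_p_other)
  have old_entry: "\<exists>hv. (x, gval ?Ip' x, hv) \<in># ?Op"
    if "x \<in> ?K - ?C" "x \<noteq> b" "hstar TS x < \<infinity>" for x
    using complete that g_other by (auto simp: open_complete_def)
  from closed_known show ?thesis
  proof (cases rule: process_trans_cases[where TS = TS and \<sigma> = \<sigma> and h = h and a = a and l = l and b = b])
    case keep
    have gb: "b \<in> ?K \<and> gval ?Ip' b = gval ?Ip b" if "hstar TS b < \<infinity>"
      using keep(2) h_le that gval_upd_p_le[OF a', of b] dom
      by (auto simp: top_unique order.antisym)
    have "closed_relaxed TS ?Ip' ?C (insert (a, l, b) A)"
      by (rule closed_relaxed_upd_p[OF relaxed a' order.refl]) (use g_other gb in metis)
    moreover have "open_complete TS ?Ip' (insert b ?K) ?C ?Op"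
      unfolding open_complete_def
    proof (intro ballI impI)
      fix x assume "x \<in> insert b ?K - ?C" "hstar TS x < \<infinity>"
      then show "\<exists>hv. (x, gval ?Ip' x, hv) \<in># ?Op"
        using old_entry gb complete by (cases "x = b") (auto simp: open_complete_def)
    qed
    ultimately show ?thesis
      using keep(1) reach' wf' sound' closed_known no_goal by (auto simp: astar_inv_def)
  next
    case push
    have "closed_relaxed TS ?Ip' (?C - {b}) (insert (a, l, b) A)"
      by (rule closed_relaxed_upd_p[OF relaxed a']) (use g_other in auto)
    moreover have "open_complete TS ?Ip' (insert b ?K) (?C - {b}) (add_mset (b, gval ?Ip' b, h b ?Ih') ?Op)"
      using old_entry by (auto simp: open_complete_def)
    moreover have "open_sound TS ?Ip' (insert b ?K) (add_mset (b, gval ?Ip' b, h b ?Ih') ?Op)"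
      using sound' h_le by (simp add: open_sound_def)
    ultimately show ?thesis
      using push(1) reach' wf' closed_known no_goal by (auto simp: astar_inv_def)
  qed
qed

lemma astar_inv_fold_process_trans:
  assumes cost: "\<forall>l. 0 \<le> ts_c TS l" and adm: "dyn_admissible TS \<sigma> h"
  shows "astar_inv TS \<sigma> A cf \<Longrightarrow> set ts \<subseteq> ts_T TS \<Longrightarrow> fst ` set ts \<subseteq> c_known cf \<Longrightarrow>
    astar_inv TS \<sigma> (A \<union> set ts) (fold (\<lambda>t c. process_trans TS \<sigma> h c t) ts cf)"
proof (induction ts arbitrary: A cf)
  case Nil
  then show ?case by simp
next
  case (Cons t ts)
  obtain a l b where t: "t = (a, l, b)" by (cases t)
  let ?cf' = "process_trans TS \<sigma> h cf t"
  have "astar_inv TS \<sigma> (insert t A) ?cf'"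
    unfolding t using Cons.prems t by (intro astar_inv_process_trans[OF cost adm]) auto
  moreover have "c_known cf \<subseteq> c_known ?cf'" unfolding t c_known_process_trans by blast
  ultimately have "astar_inv TS \<sigma> (insert t A \<union> set ts) (fold (\<lambda>t c. process_trans TS \<sigma> h c t) ts ?cf')"
    using Cons.prems by (intro Cons.IH) auto
  then show ?case by simp
qed

lemma astar_inv_expand:
  assumes cost: "\<forall>l. 0 \<le> ts_c TS l" and adm: "dyn_admissible TS \<sigma> h"
    and inv: "astar_inv TS \<sigma> UNIV cf" and entry: "(s, gh, hh) \<in># c_open cf"
    and open_s: "s \<notin> c_closed cf" and not_goal: "s \<notin> ts_SG TS"
    and ts: "set ts = {t \<in> ts_T TS. fst t = s}"
  shows "astar_inv TS \<sigma> UNIV (fold (\<lambda>t c. process_trans TS \<sigma> h c t) ts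
           (cf\<lparr>c_Ih := i_ref \<sigma> (c_Ih cf) s, c_closed := insert s (c_closed cf),
               c_open := c_open cf - {#(s, gh, hh)#}\<rparr>))"
proof -
  let ?cf0 = "cf\<lparr>c_Ih := i_ref \<sigma> (c_Ih cf) s, c_closed := insert s (c_closed cf),
                 c_open := c_open cf - {#(s, gh, hh)#}\<rparr>"
  let ?Ip = "c_Ip cf" and ?K = "c_known cf" and ?C = "c_closed cf"
  have sound: "open_sound TS ?Ip ?K (c_open cf)" and complete: "open_complete TS ?Ip ?K ?C (c_open cf)"
    and relaxed: "closed_relaxed TS ?Ip ?C UNIV"
    using inv by (auto simp: astar_inv_def)
  have s: "s \<in> ?K" using sound entry by (auto simp: open_sound_def)
  have "reach_info TS \<sigma> (i_ref \<sigma> (c_Ih cf) s) ?K"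
    by (rule ri_ref[OF _ s]) (use inv in \<open>simp add: astar_inv_def\<close>)
  moreover have "open_complete TS ?Ip ?K (insert s ?C) (c_open cf - {#(s, gh, hh)#})"
    by (rule open_complete_remove[OF complete]) auto
  moreover have "closed_relaxed TS ?Ip (insert s ?C) {t. fst t \<noteq> s}"
    using relaxed by (auto simp: closed_relaxed_def)
  ultimately have "astar_inv TS \<sigma> {t. fst t \<noteq> s} ?cf0"
    using inv open_sound_remove[OF sound] s not_goal by (auto simp: astar_inv_def)
  then have "astar_inv TS \<sigma> ({t. fst t \<noteq> s} \<union> set ts) (fold (\<lambda>t c. process_trans TS \<sigma> h c t) ts ?cf0)"
    using s ts by (intro astar_inv_fold_process_trans[OF cost adm]) auto
  then show ?thesis by (rule astar_inv_mono) (use ts in auto)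
qed

lemma astar_inv_da_step:
  assumes cost: "\<forall>l. 0 \<le> ts_c TS l" and adm: "dyn_admissible TS \<sigma> h"
    and inv: "astar_inv TS \<sigma> UNIV cf" and step: "da_step TS \<sigma> h reeval cf (Run cf')"
  shows "astar_inv TS \<sigma> UNIV cf'"
  using step
proof cases
  case (ds_closed e)
  then show ?thesis using astar_inv_drop_closed[OF inv] by simp
next
  case (ds_reeval s gh hh Ih')
  then show ?thesis using astar_inv_reeval[OF adm inv] by simp
next
  case (ds_expand s gh hh Ih' ts)
  then show ?thesis using astar_inv_expand[OF cost adm inv] by simp
qed

lemma da_step_Ret_optimal:
  assumes cost: "\<forall>l. 0 \<le> ts_c TS l" and inv: "astar_inv TS \<sigma> UNIV cf"
    and step: "da_step TS \<sigma> h reeval cf (Ret es)"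
  shows "is_solution TS es \<and> ennreal (path_cost TS es) = hstar TS (ts_sI TS)"
  using step by cases (use returned_path_optimal[OF cost inv] in blast)

lemma astar_inv_reachable:
  assumes cost: "\<forall>l. 0 \<le> ts_c TS l" and adm: "dyn_admissible TS \<sigma> h"
    and reach: "(res_step TS \<sigma> h reeval)\<^sup>*\<^sup>* (Run (init_conf TS \<sigma> h)) (Run cf)"
  shows "astar_inv TS \<sigma> UNIV cf"
proof -
  have "\<forall>cf. r = Run cf \<longrightarrow> astar_inv TS \<sigma> UNIV cf"
    if "(res_step TS \<sigma> h reeval)\<^sup>*\<^sup>* (Run (init_conf TS \<sigma> h)) r" for r
    using that
  proof (induction rule: rtranclp_induct)
    case base
    then show ?case using astar_inv_init[OF adm] by simp
  next
    case (step r r')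
    then show ?case by (cases r) (auto intro: astar_inv_da_step[OF cost adm])
  qed
  then show ?thesis using reach by blast
qed

theorem theorem5:
  fixes TS :: "('s::finite, 'l::finite) tsys"
    and \<sigma>h :: "('i, 's, 'l) isrc"
    and h :: "'s \<Rightarrow> 'i \<Rightarrow> ennreal"
    and reeval :: bool
    and \<pi> :: "('s \<times> 'l \<times> 's) list"
  assumes "\<forall>l. ts_c TS l \<ge> 0"
    and "dyn_admissible TS \<sigma>h h"
    and "dastar_returns TS \<sigma>h h reeval \<pi>"
  shows "is_solution TS \<pi> \<and> ennreal (path_cost TS \<pi>) = hstar TS (ts_sI TS)"
proof -
  have "(res_step TS \<sigma>h h reeval)\<^sup>*\<^sup>* (Run (init_conf TS \<sigma>h h)) (Ret \<pi>)"
    using assms(3) by (simp add: dastar_returns_def)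
  then obtain r where "(res_step TS \<sigma>h h reeval)\<^sup>*\<^sup>* (Run (init_conf TS \<sigma>h h)) r"
    and "res_step TS \<sigma>h h reeval r (Ret \<pi>)"
    by (cases rule: rtranclp.cases) auto
  then obtain cf where "(res_step TS \<sigma>h h reeval)\<^sup>*\<^sup>* (Run (init_conf TS \<sigma>h h)) (Run cf)"
    and "da_step TS \<sigma>h h reeval cf (Ret \<pi>)"
    by (cases r) auto
  then show ?thesis
    using astar_inv_reachable[OF assms(1,2)] da_step_Ret_optimal[OF assms(1)] by blast
qed

end
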